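(* Let $P=\{\mathbf{u}\in\mathbb{R}^n:\ell_j(\mathbf{u}):=\langle\mathbf{u},\mathbf{v}_j\rangle-\lambda_j\ge0,\ j=1,\dots,m\}$ and, for $i=1,2,\dots$, let $P^{(i)}=\{\mathbf{u}:\ell^{(i)}_j(\mathbf{u}):=\langle\mathbf{u},\mathbf{v}_j\rangle-\lambda^{(i)}_j\ge0,\ j=1,\dots,m\}$ be polytopes, where all these descriptions are non-redundant (each half-space bounds a distinct facet) and the $\mathbf{v}_j\in\mathbb{Z}^n$ are primitive. If $P^{(i)}$ converges to $P$ with respect to the Hausdorff distance, then $\lambda^{(i)}_j-\lambda_j\to0$ as $i\to\infty$ for each $j$.
   Context: The Hausdorff distance between subsets $Q_1,Q_2\subset\mathbb{R}^n$ is $\max\{\sup_{q_1\in Q_1}\inf_{q_2\in Q_2}d(q_1,q_2),\ \sup_{q_2\in Q_2}\inf_{q_1\in Q_1}d(q_1,q_2)\}$ with $d$ the Euclidean distance. *)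

theory Defs
  imports "HOL-Analysis.Analysis"
begin

definition hausdorff_dist :: "'a::metric_space set \<Rightarrow> 'a set \<Rightarrow> real" where
  "hausdorff_dist Q1 Q2 =
     max (SUP q1\<in>Q1. INF q2\<in>Q2. dist q1 q2) (SUP q2\<in>Q2. INF q1\<in>Q1. dist q1 q2)"

definition primitive_int_vec :: "real ^ 'n \<Rightarrow> bool" where
  "primitive_int_vec v \<longleftrightarrow> (\<forall>i. v $ i \<in> \<int>) \<and>
     (\<forall>d::int. (\<forall>i. \<exists>k::int. v $ i = of_int (d * k)) \<longrightarrow> \<bar>d\<bar> = 1)"

definition halfspace_poly :: "nat \<Rightarrow> (nat \<Rightarrow> real ^ 'n) \<Rightarrow> (nat \<Rightarrow> real) \<Rightarrow> (real ^ 'n) set" where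
  "halfspace_poly m v lam = {u. \<forall>j<m. u \<bullet> v j - lam j \<ge> 0}"

definition nonredundant :: "nat \<Rightarrow> (nat \<Rightarrow> real ^ 'n) \<Rightarrow> (nat \<Rightarrow> real) \<Rightarrow> bool" where
  "nonredundant m v lam \<longleftrightarrow>
     (\<forall>j<m. (halfspace_poly m v lam \<inter> {u. u \<bullet> v j - lam j = 0}) facet_of halfspace_poly m v lam) \<and>
     inj_on (\<lambda>j. halfspace_poly m v lam \<inter> {u. u \<bullet> v j - lam j = 0}) {..<m}"

end

theory Submission
  imports Defs
begin

text \<open>The offset \<open>\<lambda>\<^sub>j\<close> of a facet-defining inequality is the minimum of \<open>\<langle>u, v\<^sub>j\<rangle>\<close> over the
  polytope, attained on the (nonempty) facet. Minima of the linear functional \<open>\<langle>-, w\<rangle>\<close> over two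
  bounded sets differ by at most \<open>\<parallel>w\<parallel>\<close> times their Hausdorff distance, because moving a
  minimiser of one set to a nearby point of the other changes \<open>\<langle>-, w\<rangle>\<close> by at most
  \<open>\<parallel>w\<parallel>\<close> times the distance moved.\<close>

lemma hausdorff_dist_commute: "hausdorff_dist A B = hausdorff_dist B A"
  unfolding hausdorff_dist_def by (simp add: dist_commute max.commute)

lemma infdist_le_hausdorff_dist:
  fixes A B :: "'a::real_normed_vector set"
  assumes "bounded A" "B \<noteq> {}" "a \<in> A"
  shows "infdist a B \<le> hausdorff_dist A B"
proof -
  obtain b0 where b0: "b0 \<in> B" using assms(2) by auto
  obtain K where K: "\<And>x. x \<in> A \<Longrightarrow> norm x \<le> K" using assms(1) bounded_iff by blast
  have "infdist x B \<le> K + norm b0" if "x \<in> A" for x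
  proof -
    have "infdist x B \<le> dist x b0" by (rule infdist_le[OF b0])
    also have "\<dots> \<le> norm x + norm b0" by (simp add: dist_norm norm_triangle_ineq4)
    finally show ?thesis using K[OF that] by linarith
  qed
  then have "bdd_above ((\<lambda>x. infdist x B) ` A)" by (intro bdd_aboveI[of _ "K + norm b0"]) auto
  then have "infdist a B \<le> (SUP x\<in>A. infdist x B)" by (rule cSUP_upper[OF assms(3)])
  also have "\<dots> \<le> hausdorff_dist A B"
    unfolding hausdorff_dist_def infdist_notempty[OF assms(2)] by simp
  finally show ?thesis .
qed

lemma min_inner_diff_le_infdist:
  fixes w :: "'a::real_inner"
  assumes "a \<in> A" "a \<bullet> w = \<alpha>" "\<And>y. y \<in> B \<Longrightarrow> \<beta> \<le> y \<bullet> w" "B \<noteq> {}"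
  shows "\<beta> - \<alpha> \<le> norm w * infdist a B"
proof -
  have gap: "\<beta> - \<alpha> \<le> norm w * dist a b" if "b \<in> B" for b
  proof -
    have "\<beta> - \<alpha> \<le> (b - a) \<bullet> w" using assms(2) assms(3)[OF that] by (simp add: inner_diff_left)
    also have "\<dots> \<le> norm (b - a) * norm w" by (rule norm_cauchy_schwarz)
    finally show ?thesis by (simp add: dist_norm norm_minus_commute mult.commute)
  qed
  show ?thesis
  proof (cases "w = 0")
    case True
    with gap assms(4) show ?thesis by auto
  next
    case False
    then have "(\<beta> - \<alpha>) / norm w \<le> dist a b" if "b \<in> B" for b
      using gap[OF that] by (simp add: divide_le_eq mult.commute)
    then have "(\<beta> - \<alpha>) / norm w \<le> infdist a B"
      unfolding infdist_notempty[OF assms(4)] by (intro cINF_greatest[OF assms(4)])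
    with False show ?thesis by (simp add: divide_le_eq mult.commute)
  qed
qed

lemma min_inner_diff_le_hausdorff_dist:
  fixes w :: "'a::real_inner"
  assumes "bounded A" "bounded B"
    and "a \<in> A" "a \<bullet> w = \<alpha>" "\<And>x. x \<in> A \<Longrightarrow> \<alpha> \<le> x \<bullet> w"
    and "b \<in> B" "b \<bullet> w = \<beta>" "\<And>y. y \<in> B \<Longrightarrow> \<beta> \<le> y \<bullet> w"
  shows "\<bar>\<alpha> - \<beta>\<bar> \<le> norm w * hausdorff_dist A B"
proof -
  have "\<beta> - \<alpha> \<le> norm w * infdist a B"
    using assms(3,4,6,8) by (intro min_inner_diff_le_infdist) auto
  also have "\<dots> \<le> norm w * hausdorff_dist A B"
    using assms(1,3,6) by (intro mult_left_mono infdist_le_hausdorff_dist) auto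
  moreover have "\<alpha> - \<beta> \<le> norm w * infdist b A"
    using assms(3,5,6,7) by (intro min_inner_diff_le_infdist) auto
  moreover have "\<dots> \<le> norm w * hausdorff_dist A B"
    using assms(2,3,6) hausdorff_dist_commute[of A B]
    by (auto intro: mult_left_mono infdist_le_hausdorff_dist)
  ultimately show ?thesis by linarith
qed

lemma nonredundant_facet_point:
  assumes "nonredundant m v lam" "j < m"
  obtains u where "u \<in> halfspace_poly m v lam" "u \<bullet> v j = lam j"
proof -
  have "halfspace_poly m v lam \<inter> {u. u \<bullet> v j - lam j = 0} \<noteq> {}"
    using assms unfolding nonredundant_def facet_of_def by blast
  with that show ?thesis by auto
qed

lemma halfspace_poly_inner_ge: "u \<in> halfspace_poly m v lam \<Longrightarrow> j < m \<Longrightarrow> lam j \<le> u \<bullet> v j"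
  by (simp add: halfspace_poly_def)

theorem lemma7p2:
  fixes m :: nat
    and v :: "nat \<Rightarrow> real ^ 'n"
    and lam :: "nat \<Rightarrow> real"
    and lamseq :: "nat \<Rightarrow> nat \<Rightarrow> real"
  assumes prim: "\<forall>j<m. primitive_int_vec (v j)"
    and P_poly: "polytope (halfspace_poly m v lam)"
    and P_nr: "nonredundant m v lam"
    and Pi_poly: "\<forall>i. polytope (halfspace_poly m v (lamseq i))"
    and Pi_nr: "\<forall>i. nonredundant m v (lamseq i)"
    and conv: "(\<lambda>i. hausdorff_dist (halfspace_poly m v (lamseq i)) (halfspace_poly m v lam))
                 \<longlonglongrightarrow> 0"
  shows "\<forall>j<m. (\<lambda>i. lamseq i j - lam j) \<longlonglongrightarrow> 0"
proof (intro allI impI)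
  fix j assume j: "j < m"
  let ?h = "\<lambda>i. hausdorff_dist (halfspace_poly m v (lamseq i)) (halfspace_poly m v lam)"
  have bound: "norm (lamseq i j - lam j) \<le> norm (v j) * ?h i" for i
  proof -
    obtain a where a: "a \<in> halfspace_poly m v (lamseq i)" "a \<bullet> v j = lamseq i j"
      using nonredundant_facet_point Pi_nr j by metis
    obtain b where b: "b \<in> halfspace_poly m v lam" "b \<bullet> v j = lam j"
      using nonredundant_facet_point P_nr j by metis
    have "bounded (halfspace_poly m v (lamseq i))" "bounded (halfspace_poly m v lam)"
      using P_poly Pi_poly polytope_imp_bounded by blast+
    moreover have "\<And>x. x \<in> halfspace_poly m v (lamseq i) \<Longrightarrow> lamseq i j \<le> x \<bullet> v j"
      "\<And>y. y \<in> halfspace_poly m v lam \<Longrightarrow> lam j \<le> y \<bullet> v j"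
      using halfspace_poly_inner_ge j by blast+
    ultimately have "\<bar>lamseq i j - lam j\<bar> \<le> norm (v j) * ?h i"
      using a b by (intro min_inner_diff_le_hausdorff_dist[where w = "v j"])
    then show ?thesis by simp
  qed
  have "(\<lambda>i. norm (v j) * ?h i) \<longlonglongrightarrow> 0"
    using conv by (rule tendsto_mult_right_zero)
  with bound show "(\<lambda>i. lamseq i j - lam j) \<longlonglongrightarrow> 0"
    by (rule Lim_null_comparison[OF always_eventually[OF allI]])
qed

end
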